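(* Let $G$ be a finite abelian group and let $k \in \mathbb{N}$. (1) Let $B$ be a zero-sum sequence over $G$ with $\max\mathsf{L}(B)=k+1$ and let $U$ be a minimal zero-sum sequence over $G$ with $U \mid B$. Then $\max\mathsf{L}(U^{-1}B)\le k$. Moreover, $\max\mathsf{L}(U^{-1}B) = k$ if and only if there exists some factorization $\zeta$ of $B$ of length $k+1$ in which $U$ occurs as a factor. (2) Let $M$ be the minimum of $|U|$ over all minimal zero-sum sequences $U$ that divide some zero-sum sequence $B$ over $G$ with $\max\mathsf{L}(B)=k+1$ and $|B|=\mathsf{D}_{k+1}(G)$. Then $\mathsf{D}_{k+1}(G)\le \mathsf{D}_k(G) + M$. (3) For each $\ell \in \mathbb{N}$, $\mathsf{D}_{k+1}(G) \le \max \{\mathsf{D}_k(G) + \ell, \mathsf{s}_{\le \ell}(G)-1\}$. In particular, if $\mathsf{D}_k(G) \ge \eta(G) - 1 -\exp(G)$, then $\mathsf{D}_{k+1}(G)\le \mathsf{D}_k(G) +\exp(G)$.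
   Context: $G$ is written additively. A sequence over $G$ is an element of the free abelian monoid over $G$ (a finite unordered list of elements with repetitions); $|S|$ denotes its length; $T\mid S$ means $T$ is a subsequence, and then $T^{-1}S$ is the sequence of remaining terms. A zero-sum sequence has terms summing to $0$; a minimal zero-sum sequence is a non-empty zero-sum sequence with no proper non-empty zero-sum subsequence. A factorization of a zero-sum sequence $B$ is a formal unordered product of minimal zero-sum sequences whose product is $B$; its length is the number of factors; $\mathsf{L}(B)$ is the set of lengths of factorizations of $B$. $\mathsf{D}_k(G)$ is the smallest $\ell$ such that every sequence of length at least $\ell$ has $k$ disjoint non-empty zero-sum subsequences (equivalently, the maximal length of a zero-sum sequence $B$ with $\max\mathsf{L}(B)\le k$). For $\ell\in\mathbb{N}$, $\mathsf{s}_{\le \ell}(G)\in\mathbb{N}\cup\{\infty\}$ is the smallest $n$ such that every sequence over $G$ of length at least $n$ has a non-empty zero-sum subsequence of length at most $\ell$; $\eta(G)=\mathsf{s}_{\le\exp(G)}(G)$. *)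

theory Defs
  imports Main "HOL-Library.Multiset" "HOL-Library.Extended_Nat"
begin

text \<open>Finite abelian groups are types of class ab_group_add and finite (the group is UNIV).
  Sequences over G are multisets over the type.\<close>

definition zero_sum :: "'a::ab_group_add multiset \<Rightarrow> bool" where
  "zero_sum S \<longleftrightarrow> sum_mset S = 0"

definition min_zero_sum :: "'a::ab_group_add multiset \<Rightarrow> bool" where
  "min_zero_sum U \<longleftrightarrow> U \<noteq> {#} \<and> sum_mset U = 0 \<and>
     (\<forall>T. T \<subseteq># U \<and> T \<noteq> {#} \<and> sum_mset T = 0 \<longrightarrow> T = U)"

definition factorization :: "'a::ab_group_add multiset multiset \<Rightarrow> 'a multiset \<Rightarrow> bool" where
  "factorization Z B \<longleftrightarrow> (\<forall>U\<in>#Z. min_zero_sum U) \<and> sum_mset Z = B"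

definition lengths :: "'a::ab_group_add multiset \<Rightarrow> nat set" where
  "lengths B = {size Z | Z. factorization Z B}"

definition maxL :: "'a::ab_group_add multiset \<Rightarrow> nat" where
  "maxL B = Max (lengths B)"

definition has_disjoint_zs :: "nat \<Rightarrow> 'a::ab_group_add multiset \<Rightarrow> bool" where
  "has_disjoint_zs k S \<longleftrightarrow> (\<exists>Z. size Z = k \<and> (\<forall>T\<in>#Z. T \<noteq> {#} \<and> sum_mset T = 0)
                                   \<and> sum_mset Z \<subseteq># S)"

definition Dk :: "'a::ab_group_add itself \<Rightarrow> nat \<Rightarrow> nat" where
  "Dk _ k = (LEAST l. \<forall>S::'a multiset. size S \<ge> l \<longrightarrow> has_disjoint_zs k S)"

text \<open>s_{<= l}(G) in N \<union> {\<infinity>} (Inf of the empty set of enat is \<infinity>).\<close>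
definition s_le :: "'a::ab_group_add itself \<Rightarrow> nat \<Rightarrow> enat" where
  "s_le _ l = Inf {enat n | n. \<forall>S::'a multiset. size S \<ge> n \<longrightarrow>
      (\<exists>T. T \<subseteq># S \<and> T \<noteq> {#} \<and> sum_mset T = 0 \<and> size T \<le> l)}"

definition nsmul :: "nat \<Rightarrow> 'a::ab_group_add \<Rightarrow> 'a" where
  "nsmul n g = sum_list (replicate n g)"

definition exp_grp :: "'a::ab_group_add itself \<Rightarrow> nat" where
  "exp_grp _ = (LEAST n. n > 0 \<and> (\<forall>g::'a. nsmul n g = 0))"

definition eta :: "'a::ab_group_add itself \<Rightarrow> enat" where
  "eta G = s_le G (exp_grp G)"

end

theory Submission
  imports Defs "HOL-Library.Cardinality"
begin

text \<open>A zero-sum sequence B with max L(B) \<le> k has length at most D_k(G): otherwise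
  dropping one term leaves k disjoint zero-sum subsequences, and together with the (non-empty,
  zero-sum) rest they refine to a factorization of B of length k + 1. Conversely, a sequence of
  length D_k(G) - 1 without k disjoint zero-sum subsequences, completed by the negative of its
  sum, is a zero-sum sequence of length D_k(G) with max L \<le> k. Removing a minimal zero-sum U
  from B with max L(B) = k + 1 lowers max L by at least one, hence |B| \<le> D_k(G) + |U|; and a
  sequence of length at least s_{\<le>l}(G) contains a zero-sum subsequence, hence a minimal one,
  of length at most l.\<close>

lemma mset_take_subseteq: "mset (take n xs) \<subseteq># mset xs"
  by (metis append_take_drop_id mset_append mset_subset_eq_add_left)

lemma mset_drop_subseteq: "mset (drop n xs) \<subseteq># mset xs"
  by (metis append_take_drop_id mset_append mset_subset_eq_add_right)

lemma obtain_subset_mset_size: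
  assumes "n \<le> size M"
  obtains N where "N \<subseteq># M" "size N = n"
proof -
  obtain xs where xs: "mset xs = M" using ex_mset by blast
  show thesis
    using that[of "mset (take n xs)"] assms mset_take_subseteq[of n xs]
    unfolding xs[symmetric] by (simp add: min_def)
qed

lemma subset_mset_add_mset_notin:
  assumes "x \<notin># A" "A \<subseteq># add_mset x B"
  shows "A \<subseteq># B"
  unfolding subseteq_mset_def
proof
  fix y
  show "count A y \<le> count B y"
    using mset_subset_eq_count[OF assms(2), of y] assms(1)
    by (cases "y = x") (simp_all add: not_in_iff)
qed

lemma sum_mset_mono_subset_mset:
  fixes Z :: "'a multiset multiset"
  shows "Z' \<subseteq># Z \<Longrightarrow> sum_mset Z' \<subseteq># sum_mset Z"
  by (metis mset_subset_eq_add_left subset_mset.add_diff_inverse sum_mset.union)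

lemma sum_mset_sum_mset_eq_0:
  "\<forall>T\<in>#Z. sum_mset T = 0 \<Longrightarrow> sum_mset (sum_mset Z) = (0::'a::ab_group_add)"
  by (induction Z) auto

subsection \<open>Factorizations\<close>

lemma min_zero_sumD: "min_zero_sum U \<Longrightarrow> U \<noteq> {#} \<and> sum_mset U = 0"
  unfolding min_zero_sum_def by blast

lemma zero_sum_diff_min_zero_sum:
  assumes "zero_sum B" "min_zero_sum U" "U \<subseteq># B"
  shows "zero_sum (B - U)"
proof -
  have "sum_mset (B - U) + sum_mset U = sum_mset B"
    using assms(3) by (metis subset_mset.diff_add sum_mset.union)
  then show ?thesis using assms(1) min_zero_sumD[OF assms(2)] unfolding zero_sum_def by simp
qed

lemma min_zero_sum_subset_exists:
  fixes T :: "'a::ab_group_add multiset"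
  assumes "T \<noteq> {#}" "sum_mset T = 0"
  obtains U where "min_zero_sum U" "U \<subseteq># T"
proof -
  define P where "P X \<longleftrightarrow> X \<subseteq># T \<and> X \<noteq> {#} \<and> sum_mset X = 0" for X
  obtain U where U: "P U" "\<And>X. P X \<Longrightarrow> size U \<le> size X"
    using ex_has_least_nat[of P T size] assms unfolding P_def by auto
  have "min_zero_sum U"
    unfolding min_zero_sum_def
  proof (intro conjI allI impI)
    show "U \<noteq> {#}" "sum_mset U = 0" using U(1) unfolding P_def by auto
    fix X assume X: "X \<subseteq># U \<and> X \<noteq> {#} \<and> sum_mset X = 0"
    have "U \<subseteq># T" using U(1) unfolding P_def by blast
    with X have "P X" unfolding P_def using subset_mset.order_trans[OF _ \<open>U \<subseteq># T\<close>] by blast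
    then have "size U \<le> size X" by (rule U(2))
    then show "X = U" using X by (metis leD mset_subset_size subset_mset.le_imp_less_or_eq)
  qed
  then show thesis using that U(1) unfolding P_def by blast
qed

lemma factorization_exists:
  fixes B :: "'a::ab_group_add multiset"
  assumes "sum_mset B = 0"
  obtains Z where "factorization Z B"
  using assms
proof (induction "size B" arbitrary: B thesis rule: less_induct)
  case less
  show ?case
  proof (cases "B = {#}")
    case True
    then show ?thesis using less.prems(1)[of "{#}"] unfolding factorization_def by simp
  next
    case False
    then obtain U where U: "min_zero_sum U" "U \<subseteq># B"
      using min_zero_sum_subset_exists less.prems(2) by blast
    then have "sum_mset (B - U) = 0"
      using zero_sum_diff_min_zero_sum less.prems(2) unfolding zero_sum_def by blast
    moreover have "size (B - U) < size B"
    proof -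
      have "0 < size U" using min_zero_sumD[OF U(1)] nonempty_has_size by blast
      then show ?thesis using size_Diff_submset[OF U(2)] size_mset_mono[OF U(2)] by arith
    qed
    ultimately obtain Z where "factorization Z (B - U)" using less.hyps by blast
    then have "factorization (add_mset U Z) B"
      using U unfolding factorization_def by (auto simp: subset_mset.add_diff_inverse)
    then show ?thesis by (rule less.prems(1))
  qed
qed

lemma factorization_size_le: "factorization Z B \<Longrightarrow> size Z \<le> size B"
proof (induction Z arbitrary: B)
  case (add U Z)
  then have "0 < size U" "factorization Z (sum_mset Z)" "B = U + sum_mset Z"
    using min_zero_sumD nonempty_has_size unfolding factorization_def by auto
  then show ?case using add.IH[of "sum_mset Z"] by simp
qed simp

lemma finite_lengths: "finite (lengths B)"
proof -
  have "lengths B \<subseteq> {..size B}" unfolding lengths_def by (auto dest: factorization_size_le)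
  then show ?thesis by (rule finite_subset) simp
qed

lemma factorization_size_le_maxL: "factorization Z B \<Longrightarrow> size Z \<le> maxL B"
  unfolding maxL_def using finite_lengths unfolding lengths_def by (auto intro: Max_ge)

lemma maxL_attained:
  assumes "zero_sum B"
  obtains Z where "factorization Z B" "size Z = maxL B"
proof -
  have "lengths B \<noteq> {}"
    using assms factorization_exists unfolding lengths_def zero_sum_def by blast
  then have "maxL B \<in> lengths B" unfolding maxL_def using finite_lengths Max_in by blast
  then show thesis using that unfolding lengths_def by auto
qed

lemma maxL_leI:
  assumes "zero_sum B" "\<And>Z. factorization Z B \<Longrightarrow> size Z \<le> m"
  shows "maxL B \<le> m"
proof -
  obtain Z where Z: "factorization Z B" "size Z = maxL B" using maxL_attained[OF assms(1)] by blast
  show ?thesis using assms(2)[OF Z(1)] Z(2) by simp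
qed

lemma factorization_refines:
  fixes Z :: "'a::ab_group_add multiset multiset"
  assumes "\<forall>T\<in>#Z. T \<noteq> {#} \<and> sum_mset T = 0"
  shows "\<exists>F. factorization F (sum_mset Z) \<and> size Z \<le> size F"
  using assms
proof (induction Z)
  case empty
  show ?case unfolding factorization_def by (intro exI[of _ "{#}"]) simp
next
  case (add T Z)
  then obtain F where F: "factorization F (sum_mset Z)" "size Z \<le> size F" by auto
  obtain FT where FT: "factorization FT T" using add.prems factorization_exists by auto
  then have "0 < size FT"
    using add.prems unfolding factorization_def nonempty_has_size[symmetric] by auto
  moreover have "factorization (FT + F) (sum_mset (add_mset T Z))"
    using FT F(1) unfolding factorization_def by auto
  ultimately show ?case using F(2) by (intro exI[of _ "FT + F"]) simp
qed

lemma has_disjoint_zs_mono: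
  assumes "has_disjoint_zs m S" "k \<le> m" "S \<subseteq># S'"
  shows "has_disjoint_zs k S'"
proof -
  obtain Z where Z: "size Z = m" "\<forall>T\<in>#Z. T \<noteq> {#} \<and> sum_mset T = 0" "sum_mset Z \<subseteq># S"
    using assms(1) unfolding has_disjoint_zs_def by blast
  obtain Z' where Z': "Z' \<subseteq># Z" "size Z' = k"
    using obtain_subset_mset_size[of k Z] assms(2) Z(1) by blast
  have "sum_mset Z' \<subseteq># S'"
    using sum_mset_mono_subset_mset[OF Z'(1)] subset_mset.order_trans[OF Z(3) assms(3)]
    by (rule subset_mset.order_trans)
  then show ?thesis
    unfolding has_disjoint_zs_def using Z' Z(2) by (intro exI[of _ Z']) (auto dest: mset_subset_eqD)
qed

lemma factorization_has_disjoint_zs: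
  assumes "factorization Z B"
  shows "has_disjoint_zs (size Z) B"
proof -
  have "\<forall>T\<in>#Z. T \<noteq> {#} \<and> sum_mset T = 0"
    using assms min_zero_sumD unfolding factorization_def by blast
  then show ?thesis using assms unfolding factorization_def has_disjoint_zs_def by auto
qed

lemma not_has_disjoint_zs_empty:
  assumes "0 < k"
  shows "\<not> has_disjoint_zs k {#}"
proof
  assume "has_disjoint_zs k {#}"
  then obtain Z where "size Z = k" "\<forall>T\<in>#Z. T \<noteq> {#}" "sum_mset Z = {#}"
    unfolding has_disjoint_zs_def by auto
  then show False using assms by (cases Z) auto
qed

text \<open>Drop the subsequence containing the new term g, if there is one; otherwise any one.\<close>
lemma has_disjoint_zs_add_mset:
  assumes "has_disjoint_zs (Suc k) (add_mset g S)"
  shows "has_disjoint_zs k S"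
proof -
  obtain Z where Z: "size Z = Suc k" "\<forall>T\<in>#Z. T \<noteq> {#} \<and> sum_mset T = 0"
    "sum_mset Z \<subseteq># add_mset g S"
    using assms unfolding has_disjoint_zs_def by blast
  have "Z \<noteq> {#}" using Z(1) by auto
  obtain T where T: "T \<in># Z" "g \<in># sum_mset Z \<Longrightarrow> g \<in># T"
  proof (cases "g \<in># sum_mset Z")
    case True
    then show thesis using that by (auto simp: in_Union_mset_iff)
  next
    case False
    obtain T where "T \<in># Z" using multiset_nonemptyE[OF \<open>Z \<noteq> {#}\<close>] by blast
    then show thesis using that False by blast
  qed
  from multi_member_split[OF T(1)] obtain Z' where Z': "Z = add_mset T Z'" ..
  have "sum_mset Z' \<subseteq># S"
  proof (cases "g \<in># T")
    case True
    from multi_member_split[OF True] obtain T' where "T = add_mset g T'" ..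
    then have "T' + sum_mset Z' \<subseteq># S" using Z(3) unfolding Z' by simp
    then show ?thesis by (rule subset_mset.order_trans[OF mset_subset_eq_add_right])
  next
    case False
    then have "g \<notin># sum_mset Z" using T(2) by blast
    then have "sum_mset Z \<subseteq># S" using Z(3) by (rule subset_mset_add_mset_notin)
    then have "T + sum_mset Z' \<subseteq># S" unfolding Z' by simp
    then show ?thesis by (rule subset_mset.order_trans[OF mset_subset_eq_add_right])
  qed
  then show ?thesis unfolding has_disjoint_zs_def using Z Z' by (intro exI[of _ Z']) auto
qed

lemma less_maxL_if_has_disjoint_zs:
  assumes "zero_sum B" "S \<subset># B" "has_disjoint_zs k S"
  shows "k < maxL B"
proof -
  obtain Z where Z: "size Z = k" "\<forall>T\<in>#Z. T \<noteq> {#} \<and> sum_mset T = 0" "sum_mset Z \<subseteq># S"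
    using assms(3) unfolding has_disjoint_zs_def by blast
  have "sum_mset Z \<subset># B" using Z(3) assms(2) by (rule subset_mset.le_less_trans)
  define R where "R = B - sum_mset Z"
  have B: "B = R + sum_mset Z"
    unfolding R_def using \<open>sum_mset Z \<subset># B\<close> by (simp add: subset_mset.diff_add)
  have "R \<noteq> {#}" using B \<open>sum_mset Z \<subset># B\<close> by auto
  moreover have "sum_mset R = 0"
    using assms(1) sum_mset_sum_mset_eq_0[of Z] Z(2) unfolding zero_sum_def B by simp
  ultimately obtain F where F: "factorization F B" "size (add_mset R Z) \<le> size F"
    using factorization_refines[of "add_mset R Z"] Z(2) B by auto
  then show ?thesis using factorization_size_le_maxL[OF F(1)] Z(1) by simp
qed

subsection \<open>The constants D_k(G)\<close>

lemma zero_sum_subseq_short: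
  fixes S :: "'a::{ab_group_add,finite} multiset"
  assumes "CARD('a) \<le> size S"
  obtains T where "T \<subseteq># S" "T \<noteq> {#}" "sum_mset T = 0" "size T \<le> CARD('a)"
proof -
  obtain xs where xs: "mset xs = S" using ex_mset by blast
  define ps where "ps i = sum_list (take i xs)" for i
  have "\<not> inj_on ps {0..CARD('a)}"
    using card_inj_on_le[of ps "{0..CARD('a)}" UNIV] by auto
  then obtain i j where ij: "i < j" "j \<le> CARD('a)" "ps i = ps j"
    unfolding inj_on_def by (metis atLeastAtMost_iff linorder_neqE_nat)
  define T where "T = mset (drop i (take j xs))"
  have "take i (take j xs) = take i xs" using ij(1) by (simp add: min_def)
  then have "sum_list (take j xs) = sum_list (take i xs) + sum_list (drop i (take j xs))"
    by (metis append_take_drop_id sum_list_append)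
  then have "sum_mset T = 0" using ij(3) unfolding T_def ps_def by (simp add: sum_mset_sum_list)
  moreover have "T \<subseteq># S"
    unfolding T_def xs[symmetric] using mset_drop_subseteq mset_take_subseteq
    by (rule subset_mset.order_trans)
  moreover have "T \<noteq> {#}" "size T \<le> CARD('a)"
    using ij assms xs unfolding T_def by auto
  ultimately show thesis using that by blast
qed

lemma has_disjoint_zs_if_size_ge:
  fixes S :: "'a::{ab_group_add,finite} multiset"
  shows "k * CARD('a) \<le> size S \<Longrightarrow> has_disjoint_zs k S"
proof (induction k arbitrary: S)
  case 0
  then show ?case unfolding has_disjoint_zs_def by auto
next
  case (Suc k)
  then have "CARD('a) \<le> size S" by simp
  then obtain T where T: "T \<subseteq># S" "T \<noteq> {#}" "sum_mset T = 0" "size T \<le> CARD('a)"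
    by (rule zero_sum_subseq_short)
  then have "k * CARD('a) \<le> size (S - T)" using Suc.prems by (simp add: size_Diff_submset)
  then obtain Z where Z: "size Z = k" "\<forall>T\<in>#Z. T \<noteq> {#} \<and> sum_mset T = 0" "sum_mset Z \<subseteq># S - T"
    using Suc.IH unfolding has_disjoint_zs_def by blast
  then have "sum_mset (add_mset T Z) \<subseteq># S"
    using T(1) by (simp add: subset_mset.le_diff_conv2 add.commute)
  then show ?case unfolding has_disjoint_zs_def using Z T by (intro exI[of _ "add_mset T Z"]) auto
qed

lemma has_disjoint_zs_if_Dk_le:
  fixes S :: "'a::{ab_group_add,finite} multiset"
  assumes "Dk TYPE('a) k \<le> size S"
  shows "has_disjoint_zs k S"
proof -
  have "\<forall>S::'a multiset. Dk TYPE('a) k \<le> size S \<longrightarrow> has_disjoint_zs k S"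
    unfolding Dk_def by (rule LeastI_ex) (use has_disjoint_zs_if_size_ge in blast)
  then show ?thesis using assms by blast
qed

lemma Dk_pos: "0 < k \<Longrightarrow> 0 < Dk TYPE('a::{ab_group_add,finite}) k"
  using has_disjoint_zs_if_Dk_le[where S="{#}::'a multiset" and k=k] not_has_disjoint_zs_empty by auto

lemma Dk_extremal_sequence:
  assumes "0 < k"
  obtains S :: "'a::{ab_group_add,finite} multiset"
  where "size S = Dk TYPE('a) k - 1" "\<not> has_disjoint_zs k S"
proof -
  have "Dk TYPE('a) k - 1 < Dk TYPE('a) k" using Dk_pos[OF assms, where 'a='a] by simp
  then have "\<not> (\<forall>S::'a multiset. Dk TYPE('a) k - 1 \<le> size S \<longrightarrow> has_disjoint_zs k S)"
    unfolding Dk_def by (rule not_less_Least)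
  then obtain S :: "'a multiset" where S: "Dk TYPE('a) k - 1 \<le> size S" "\<not> has_disjoint_zs k S"
    by blast
  obtain S' where S': "S' \<subseteq># S" "size S' = Dk TYPE('a) k - 1"
    by (rule obtain_subset_mset_size[OF S(1)])
  then show thesis using that has_disjoint_zs_mono[of k S' k S] S(2) by blast
qed

lemma Dk_less_Dk_Suc:
  assumes "0 < k"
  shows "Dk TYPE('a::{ab_group_add,finite}) k < Dk TYPE('a) (Suc k)"
proof (rule ccontr)
  assume not_less: "\<not> ?thesis"
  obtain S :: "'a multiset" where S: "size S = Dk TYPE('a) k - 1" "\<not> has_disjoint_zs k S"
    using Dk_extremal_sequence[OF assms] by blast
  then have "Dk TYPE('a) (Suc k) \<le> size (add_mset 0 S)"
    using Dk_pos[OF assms, where 'a='a] not_less by simp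
  then have "has_disjoint_zs (Suc k) (add_mset 0 S)" by (rule has_disjoint_zs_if_Dk_le)
  then have "has_disjoint_zs k S" by (rule has_disjoint_zs_add_mset)
  then show False using S(2) by contradiction
qed

subsection \<open>D_k(G) as the maximal length of a zero-sum sequence with max L \<le> k\<close>

lemma size_le_Dk_if_maxL_le:
  fixes B :: "'a::{ab_group_add,finite} multiset"
  assumes "zero_sum B" "maxL B \<le> k"
  shows "size B \<le> Dk TYPE('a) k"
proof (rule ccontr)
  assume too_long: "\<not> ?thesis"
  then have "B \<noteq> {#}" by auto
  then obtain b where b: "b \<in># B" by (rule multiset_nonemptyE)
  with too_long have "Dk TYPE('a) k \<le> size (B - {#b#})" by (simp add: size_Diff_singleton)
  then have "has_disjoint_zs k (B - {#b#})" by (rule has_disjoint_zs_if_Dk_le)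
  then have "k < maxL B" by (rule less_maxL_if_has_disjoint_zs[OF assms(1) mset_subset_diff_self[OF b]])
  then show False using assms(2) by simp
qed

lemma zero_sum_size_Dk_maxL_le_exists:
  assumes "0 < k"
  obtains B :: "'a::{ab_group_add,finite} multiset"
  where "zero_sum B" "size B = Dk TYPE('a) k" "maxL B \<le> k"
proof -
  obtain S :: "'a multiset" where S: "size S = Dk TYPE('a) k - 1" "\<not> has_disjoint_zs k S"
    using Dk_extremal_sequence[OF assms] by blast
  define B where "B = add_mset (- sum_mset S) S"
  have "zero_sum B" unfolding B_def zero_sum_def by simp
  moreover have "size B = Dk TYPE('a) k" using S(1) Dk_pos[OF assms, where 'a='a] unfolding B_def by simp
  moreover have "maxL B \<le> k"
  proof (rule maxL_leI[OF \<open>zero_sum B\<close>], rule ccontr)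
    fix Z assume "factorization Z B" "\<not> size Z \<le> k"
    then have "has_disjoint_zs (Suc k) B"
      using has_disjoint_zs_mono[OF factorization_has_disjoint_zs, of Z B "Suc k" B] by simp
    then have "has_disjoint_zs k S" unfolding B_def by (rule has_disjoint_zs_add_mset)
    then show False using S(2) by contradiction
  qed
  ultimately show thesis using that by blast
qed

lemma zero_sum_size_Dk_Suc_maxL_exists:
  assumes "0 < k"
  obtains B :: "'a::{ab_group_add,finite} multiset"
  where "zero_sum B" "size B = Dk TYPE('a) (Suc k)" "maxL B = Suc k"
proof -
  obtain B :: "'a multiset" where B: "zero_sum B" "size B = Dk TYPE('a) (Suc k)" "maxL B \<le> Suc k"
    using zero_sum_size_Dk_maxL_le_exists[of "Suc k"] by blast
  have "Dk TYPE('a) k < size B" using Dk_less_Dk_Suc[OF assms] B(2) by simp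
  then have "\<not> maxL B \<le> k" using size_le_Dk_if_maxL_le[OF B(1)] by (meson leD)
  then show thesis using that B by simp
qed

subsection \<open>Removing a minimal zero-sum subsequence\<close>

lemma factorization_add_mset_iff:
  assumes "min_zero_sum U" "U \<subseteq># B"
  shows "factorization (add_mset U Z) B \<longleftrightarrow> factorization Z (B - U)"
proof -
  have "U + sum_mset Z = B \<longleftrightarrow> sum_mset Z = B - U"
    using subset_mset.add_diff_inverse[OF assms(2)] by auto
  then show ?thesis using assms(1) unfolding factorization_def by simp
qed

lemma maxL_diff_min_zero_sum_le:
  assumes "zero_sum B" "maxL B = k + 1" "min_zero_sum U" "U \<subseteq># B"
  shows "maxL (B - U) \<le> k"
proof (rule maxL_leI)
  show "zero_sum (B - U)" using assms zero_sum_diff_min_zero_sum by blast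
  fix Z assume "factorization Z (B - U)"
  then have "size (add_mset U Z) \<le> maxL B"
    using factorization_add_mset_iff[OF assms(3,4)] factorization_size_le_maxL by blast
  then show "size Z \<le> k" using assms(2) by simp
qed

lemma maxL_diff_min_zero_sum_eq_iff:
  assumes "zero_sum B" "maxL B = k + 1" "min_zero_sum U" "U \<subseteq># B"
  shows "maxL (B - U) = k \<longleftrightarrow> (\<exists>Z. factorization Z B \<and> size Z = k + 1 \<and> U \<in># Z)"
proof
  assume "maxL (B - U) = k"
  moreover obtain Z where "factorization Z (B - U)" "size Z = maxL (B - U)"
    using maxL_attained assms zero_sum_diff_min_zero_sum by blast
  ultimately show "\<exists>Z. factorization Z B \<and> size Z = k + 1 \<and> U \<in># Z"
    using factorization_add_mset_iff[OF assms(3,4)] by (intro exI[of _ "add_mset U Z"]) auto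
next
  assume "\<exists>Z. factorization Z B \<and> size Z = k + 1 \<and> U \<in># Z"
  then obtain Z where "factorization (add_mset U Z) B" "size Z = k"
    by (metis add_right_cancel multi_member_split size_add_mset Suc_eq_plus1)
  then have "k \<le> maxL (B - U)"
    using factorization_add_mset_iff[OF assms(3,4)] factorization_size_le_maxL by blast
  then show "maxL (B - U) = k" using maxL_diff_min_zero_sum_le[OF assms] by simp
qed

lemma size_le_Dk_plus_size_min_zero_sum:
  fixes B :: "'a::{ab_group_add,finite} multiset"
  assumes "zero_sum B" "maxL B = k + 1" "min_zero_sum U" "U \<subseteq># B"
  shows "size B \<le> Dk TYPE('a) k + size U"
proof -
  have "size (B - U) \<le> Dk TYPE('a) k"
    using size_le_Dk_if_maxL_le zero_sum_diff_min_zero_sum maxL_diff_min_zero_sum_le assms by blast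
  then show ?thesis using assms(4) by (simp add: size_Diff_submset size_mset_mono)
qed

lemma Dk_Suc_le_Dk_plus_Min:
  assumes "0 < k"
  shows "Dk TYPE('a::{ab_group_add,finite}) (k + 1) \<le> Dk TYPE('a) k +
    Min {size U | (U::'a multiset) B. min_zero_sum U \<and> U \<subseteq># B \<and> zero_sum B \<and>
                                       maxL B = k + 1 \<and> size B = Dk TYPE('a) (k + 1)}"
    (is "_ \<le> _ + Min ?M")
proof -
  obtain B :: "'a multiset" where B: "zero_sum B" "size B = Dk TYPE('a) (k + 1)" "maxL B = k + 1"
    using zero_sum_size_Dk_Suc_maxL_exists[OF assms] by auto
  then have "B \<noteq> {#}" using Dk_pos[of "k + 1", where 'a='a] by auto
  then obtain U where "min_zero_sum U" "U \<subseteq># B"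
    using B(1) unfolding zero_sum_def by (rule min_zero_sum_subset_exists)
  \<comment> \<open>Min of the empty set is unspecified, so the set has to be shown non-empty.\<close>
  then have "?M \<noteq> {}" using B by blast
  moreover have "finite ?M"
    by (rule finite_subset[of _ "{..Dk TYPE('a) (k + 1)}"]) (auto dest: size_mset_mono)
  ultimately have "Min ?M \<in> ?M" by (rule Min_in[rotated])
  then obtain U' B' :: "'a multiset" where "Min ?M = size U'" "min_zero_sum U'" "U' \<subseteq># B'"
    "zero_sum B'" "maxL B' = k + 1" "size B' = Dk TYPE('a) (k + 1)"
    by blast
  then show ?thesis using size_le_Dk_plus_size_min_zero_sum[of B' k U'] by simp
qed

subsection \<open>Short zero-sum subsequences\<close>

lemma s_le_enatE:
  fixes S :: "'a::ab_group_add multiset"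
  assumes "s_le TYPE('a) l = enat n" "n \<le> size S"
  obtains T where "T \<subseteq># S" "T \<noteq> {#}" "sum_mset T = 0" "size T \<le> l"
proof -
  let ?A = "{enat n | n. \<forall>S::'a multiset. n \<le> size S \<longrightarrow>
              (\<exists>T. T \<subseteq># S \<and> T \<noteq> {#} \<and> sum_mset T = 0 \<and> size T \<le> l)}"
  have "?A \<noteq> {}"
  proof
    assume "?A = {}"
    have "s_le TYPE('a) l = Inf ?A" unfolding s_le_def by (rule refl)
    also have "\<dots> = \<infinity>" unfolding \<open>?A = {}\<close> by (simp add: top_enat_def)
    finally show False using assms(1) by simp
  qed
  then have "Inf ?A \<in> ?A" by (meson ex_in_conv wellorder_InfI)
  moreover have "Inf ?A = enat n" using assms(1) unfolding s_le_def .
  ultimately have "enat n \<in> ?A" by (simp only:)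
  then have "\<forall>S::'a multiset. n \<le> size S \<longrightarrow>
              (\<exists>T. T \<subseteq># S \<and> T \<noteq> {#} \<and> sum_mset T = 0 \<and> size T \<le> l)"
    by auto
  then show thesis using assms(2) that by blast
qed

lemma Dk_Suc_le_max_s_le:
  assumes "0 < k"
  shows "enat (Dk TYPE('a::{ab_group_add,finite}) (k + 1))
           \<le> max (enat (Dk TYPE('a) k + l)) (s_le TYPE('a) l - 1)"
proof (cases "s_le TYPE('a) l")
  case (enat n)
  show ?thesis
  proof (cases "n \<le> Dk TYPE('a) (k + 1)")
    case True
    obtain B :: "'a multiset" where B: "zero_sum B" "size B = Dk TYPE('a) (k + 1)" "maxL B = k + 1"
      using zero_sum_size_Dk_Suc_maxL_exists[OF assms] by auto
    obtain T where T: "T \<subseteq># B" "T \<noteq> {#}" "sum_mset T = 0" "size T \<le> l"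
      using s_le_enatE[OF enat, of B] True B(2) by auto
    obtain U where U: "min_zero_sum U" "U \<subseteq># T" using T(2,3) by (rule min_zero_sum_subset_exists)
    have "U \<subseteq># B" using U(2) T(1) by (rule subset_mset.order_trans)
    then have "size B \<le> Dk TYPE('a) k + size U"
      using size_le_Dk_plus_size_min_zero_sum B U(1) by blast
    moreover have "size U \<le> l" using size_mset_mono[OF U(2)] T(4) by simp
    ultimately have "Dk TYPE('a) (k + 1) \<le> Dk TYPE('a) k + l" using B(2) by simp
    then show ?thesis by (intro max.coboundedI1) simp
  next
    case False
    then show ?thesis using enat by (simp add: one_enat_def)
  qed
qed simp

lemma Dk_Suc_le_Dk_plus_exp:
  assumes "0 < k" "eta TYPE('a::{ab_group_add,finite}) - 1 - enat (exp_grp TYPE('a)) \<le> enat (Dk TYPE('a) k)"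
  shows "Dk TYPE('a) (k + 1) \<le> Dk TYPE('a) k + exp_grp TYPE('a)"
proof -
  have "enat (Dk TYPE('a) (k + 1)) \<le> max (enat (Dk TYPE('a) k + exp_grp TYPE('a))) (eta TYPE('a) - 1)"
    using Dk_Suc_le_max_s_le[OF assms(1)] unfolding eta_def .
  then show ?thesis using assms(2) by (cases "eta TYPE('a)") (auto simp: one_enat_def)
qed

theorem proposition3p1:
  fixes k :: nat
  assumes "k \<ge> 1"
  shows
   "(\<forall>(B::'a::{ab_group_add,finite} multiset) U.
        zero_sum B \<and> maxL B = k + 1 \<and> min_zero_sum U \<and> U \<subseteq># B \<longrightarrow>
          maxL (B - U) \<le> k \<and>
          (maxL (B - U) = k \<longleftrightarrow> (\<exists>Z. factorization Z B \<and> size Z = k + 1 \<and> U \<in># Z)))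
    \<and> Dk TYPE('a) (k + 1) \<le> Dk TYPE('a) k +
        Min {size U | (U::'a multiset) B. min_zero_sum U \<and> U \<subseteq># B \<and> zero_sum B \<and>
                           maxL B = k + 1 \<and> size B = Dk TYPE('a) (k + 1)}
    \<and> (\<forall>l::nat. l \<ge> 1 \<longrightarrow>
          enat (Dk TYPE('a) (k + 1)) \<le> max (enat (Dk TYPE('a) k + l)) (s_le TYPE('a) l - 1))
    \<and> (enat (Dk TYPE('a) k) \<ge> eta TYPE('a) - 1 - enat (exp_grp TYPE('a)) \<longrightarrow>
          Dk TYPE('a) (k + 1) \<le> Dk TYPE('a) k + exp_grp TYPE('a))"
proof -
  have k: "0 < k" using assms by simp
  show ?thesis
  proof (intro conjI allI impI)
    fix B U :: "'a multiset"
    assume "zero_sum B \<and> maxL B = k + 1 \<and> min_zero_sum U \<and> U \<subseteq># B"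
    then show "maxL (B - U) \<le> k"
      and "maxL (B - U) = k \<longleftrightarrow> (\<exists>Z. factorization Z B \<and> size Z = k + 1 \<and> U \<in># Z)"
      using maxL_diff_min_zero_sum_le maxL_diff_min_zero_sum_eq_iff by blast+
  next
    show "Dk TYPE('a) (k + 1) \<le> Dk TYPE('a) k +
          Min {size U | (U::'a multiset) B. min_zero_sum U \<and> U \<subseteq># B \<and> zero_sum B \<and>
                             maxL B = k + 1 \<and> size B = Dk TYPE('a) (k + 1)}"
      by (rule Dk_Suc_le_Dk_plus_Min[OF k])
  next
    fix l :: nat
    show "enat (Dk TYPE('a) (k + 1)) \<le> max (enat (Dk TYPE('a) k + l)) (s_le TYPE('a) l - 1)"
      by (rule Dk_Suc_le_max_s_le[OF k])
  next
    assume "eta TYPE('a) - 1 - enat (exp_grp TYPE('a)) \<le> enat (Dk TYPE('a) k)"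
    then show "Dk TYPE('a) (k + 1) \<le> Dk TYPE('a) k + exp_grp TYPE('a)"
      by (rule Dk_Suc_le_Dk_plus_exp[OF k])
  qed
qed

end
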